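(* Let $k\ge1$ and $D=(X^k-1)\,\partial_X-(kX^{k-1}Y+1)\,\partial_Y$. Then $f(X,Y)=Y(X^k-1)+X$ is an indecomposable polynomial first integral of $D$; the quantity $\mathcal{B}$ associated to $D$ equals $k$; the spectrum $\sigma(f,1)$ contains the $k+1$ points $(1:\omega)$ with $\omega^k=1$ and $(0:1)$; $\gamma(f,1)=\{(0:1)\}$; and hence $\mathcal{B}+1\le|\sigma(f,1)|<\mathcal{B}+3$.
   Context: A rational function $h$ is a first integral of $D$ if $D(h)=0$; $h$ is decomposable if $h=u(h')$ with $u\in\mathbb{C}(T)$, $\deg u\ge2$, $h'\in\mathbb{C}(X,Y)$, indecomposable otherwise. Here $g=1$, $d=\deg(f/1)=k+1$, $f^h=Z^{d}f(X/Z,Y/Z)$, $1^h=Z^{d}$. $\sigma(f,1)=\{(\lambda:\mu)\in\mathbb{P}^1(\mathbb{C}) : \lambda f^h-\mu Z^{d}\text{ reducible in }\mathbb{C}[X,Y,Z]\}$ and $\gamma(f,1)=\{(\lambda:\mu): \lambda f^h-\mu Z^d=P^e,\ P\in\mathbb{C}[X,Y,Z],\ e>1\}$. For $D=A\partial_X+B\partial_Y$, $\mathcal{B}$ is the number of integer points in $N_D\cap\mathbb{N}^2$, where $N_D$ is the Newton polygon (convex hull of exponents of nonzero terms) of the Laurent polynomial $x\,A/X+y\,B/Y$ for a generic $(x,y)\in\mathbb{C}^2$. *)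

theory Defs
  imports "HOL-Analysis.Analysis" "HOL-Computational_Algebra.Computational_Algebra"
begin

text \<open>Bivariate polynomials C[X,Y] are represented as complex poly poly:
  the outer variable is Y, the inner variable is X.  Trivariate polynomials
  C[X,Y,Z] are complex poly poly poly with outer variable Z, then Y, then X.\<close>

type_synonym bpoly = "complex poly poly"
type_synonym tpoly = "complex poly poly poly"

definition varX :: bpoly where "varX = [:[:0, 1:]:]"
definition varY :: bpoly where "varY = [:0, 1:]"
definition constB :: "complex \<Rightarrow> bpoly" where "constB c = [:[:c:]:]"

definition bcoeff :: "bpoly \<Rightarrow> nat \<Rightarrow> nat \<Rightarrow> complex" where
  "bcoeff p i j = coeff (coeff p j) i"

definition dX :: "bpoly \<Rightarrow> bpoly" where "dX p = map_poly pderiv p"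
definition dY :: "bpoly \<Rightarrow> bpoly" where "dY p = pderiv p"

definition derivD :: "bpoly \<Rightarrow> bpoly \<Rightarrow> bpoly \<Rightarrow> bpoly" where
  "derivD A B p = A * dX p + B * dY p"

definition poly_first_integral :: "bpoly \<Rightarrow> bpoly \<Rightarrow> bpoly \<Rightarrow> bool" where
  "poly_first_integral A B f \<longleftrightarrow> derivD A B f = 0"

text \<open>Rational functions C(X,Y) = fraction field of C[X,Y]; C(T) elements u = p/q
  with p, q coprime, degree of u = max (deg p) (deg q).\<close>
definition ratfun :: "bpoly \<Rightarrow> bpoly fract" where "ratfun p = Fract p 1"

definition eval_at :: "complex poly \<Rightarrow> bpoly fract \<Rightarrow> bpoly fract" where
  "eval_at p h = (\<Sum>i\<le>degree p. ratfun (constB (coeff p i)) * h ^ i)"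

definition decomposable :: "bpoly fract \<Rightarrow> bool" where
  "decomposable h \<longleftrightarrow> (\<exists>(p::complex poly) (q::complex poly) (h'::bpoly fract).
      q \<noteq> 0 \<and> coprime p q \<and> max (degree p) (degree q) \<ge> 2 \<and>
      eval_at q h' \<noteq> 0 \<and> h = eval_at p h' / eval_at q h')"

definition indecomposable :: "bpoly fract \<Rightarrow> bool" where
  "indecomposable h \<longleftrightarrow> \<not> decomposable h"

definition tdeg :: "bpoly \<Rightarrow> nat" where
  "tdeg p = Max ({0} \<union> {i + j | i j. bcoeff p i j \<noteq> 0})"

definition varX3 :: tpoly where "varX3 = [:[:[:0, 1:]:]:]"
definition varY3 :: tpoly where "varY3 = [:[:0, 1:]:]"
definition varZ3 :: tpoly where "varZ3 = [:0, 1:]"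
definition const3 :: "complex \<Rightarrow> tpoly" where "const3 c = [:[:[:c:]:]:]"

text \<open>p^h = Z^d p(X/Z, Y/Z) (for d \<ge> total degree of p)\<close>
definition homog :: "nat \<Rightarrow> bpoly \<Rightarrow> tpoly" where
  "homog d p = (\<Sum>i\<le>d. \<Sum>j\<le>d. if i + j \<le> d
      then const3 (bcoeff p i j) * varX3 ^ i * varY3 ^ j * varZ3 ^ (d - i - j) else 0)"

text \<open>points of P^1(C): equivalence classes of nonzero pairs\<close>
definition proj_pt :: "complex \<Rightarrow> complex \<Rightarrow> (complex \<times> complex) set" where
  "proj_pt l m = {(c * l, c * m) | c. c \<noteq> 0}"

definition pencil :: "bpoly \<Rightarrow> bpoly \<Rightarrow> complex \<Rightarrow> complex \<Rightarrow> tpoly" where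
  "pencil f g l m = (let d = max (tdeg f) (tdeg g) in
      const3 l * homog d f - const3 m * homog d g)"

definition spectrum_sigma :: "bpoly \<Rightarrow> bpoly \<Rightarrow> (complex \<times> complex) set set" where
  "spectrum_sigma f g = {proj_pt l m | l m. (l, m) \<noteq> (0, 0) \<and> \<not> irreducible (pencil f g l m)}"

definition spectrum_gamma :: "bpoly \<Rightarrow> bpoly \<Rightarrow> (complex \<times> complex) set set" where
  "spectrum_gamma f g = {proj_pt l m | l m. (l, m) \<noteq> (0, 0) \<and>
      (\<exists>(P::tpoly) (e::nat). e > 1 \<and> pencil f g l m = P ^ e)}"

text \<open>Newton polygon of the Laurent polynomial x A/X + y B/Y\<close>
definition icoeff :: "bpoly \<Rightarrow> int \<Rightarrow> int \<Rightarrow> complex" where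
  "icoeff p i j = (if i \<ge> 0 \<and> j \<ge> 0 then bcoeff p (nat i) (nat j) else 0)"

definition laurent_support :: "bpoly \<Rightarrow> bpoly \<Rightarrow> complex \<Rightarrow> complex \<Rightarrow> (int \<times> int) set" where
  "laurent_support A B x y =
     {(a, b). x * icoeff A (a + 1) b + y * icoeff B a (b + 1) \<noteq> 0}"

definition newton_polygon :: "bpoly \<Rightarrow> bpoly \<Rightarrow> complex \<Rightarrow> complex \<Rightarrow> (real \<times> real) set" where
  "newton_polygon A B x y =
     convex hull ((\<lambda>(a, b). (real_of_int a, real_of_int b)) ` laurent_support A B x y)"

definition lattice_count :: "bpoly \<Rightarrow> bpoly \<Rightarrow> complex \<Rightarrow> complex \<Rightarrow> nat" where
  "lattice_count A B x y = card {p :: nat \<times> nat. (real (fst p), real (snd p)) \<in> newton_polygon A B x y}"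

definition generic :: "(complex \<Rightarrow> complex \<Rightarrow> bool) \<Rightarrow> bool" where
  "generic P \<longleftrightarrow> (\<exists>q::bpoly. q \<noteq> 0 \<and> (\<forall>x y. poly (poly q [:y:]) x \<noteq> 0 \<longrightarrow> P x y))"

definition calB :: "bpoly \<Rightarrow> bpoly \<Rightarrow> nat" where
  "calB A B = (THE n. generic (\<lambda>x y. lattice_count A B x y = n))"

end

theory Submission
  imports Defs "HOL-Computational_Algebra.Field_as_Ring"
begin

(*
  For \<lambda> = 1 and \<mu>^k \<noteq> 1 it is linear in Y with coprime coefficients, hence irreducible;
      for \<mu>^k = 1 it has the factor X - \<mu> Z; for \<lambda> = 0 it is -\<mu> Z^(k+1), a perfect power,
      while no member with \<lambda> \<noteq> 0 is a proper power because its Z-free part has Y-degree 1.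
  (5) Indecomposability: if f = p(h)/q(h) with h = a/b in lowest terms, then f Q = P for the
      cleared numerators P = b^n p(a/b), Q = b^n q(a/b).  These are coprime, so Q is a unit;
      this forces b or a - \<beta> b to be constant, and then P is a polynomial of degree n \<ge> 2 in
      a single bivariate polynomial, which contradicts deg_Y f = 1.
  Field_as_Ring supplies the factorial-ring structure of C, hence of C[X], C[X][Y], ...,
  which the prime-factor arguments in (4) and (5) rely on.
*)

section \<open>Generic algebra\<close>

lemma map_poly_add_hom:
  assumes "f 0 = 0" "\<And>x y. f (x + y) = f x + f y"
  shows "map_poly f (p + q) = map_poly f p + map_poly f q"
  by (intro poly_eqI) (simp add: coeff_map_poly assms)

lemma map_poly_mult_hom:
  fixes f :: "'a::comm_semiring_1 \<Rightarrow> 'b::comm_semiring_1"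
  assumes "f 0 = 0" "\<And>x y. f (x + y) = f x + f y" "\<And>x y. f (x * y) = f x * f y"
  shows "map_poly f (p * q) = map_poly f p * map_poly f q"
proof (induction p)
  case 0
  then show ?case by simp
next
  case (pCons a p)
  have "map_poly f (pCons a p * q) = map_poly f (smult a q + pCons 0 (p * q))"
    by simp
  also have "\<dots> = smult (f a) (map_poly f q) + pCons 0 (map_poly f p * map_poly f q)"
    by (simp add: map_poly_add_hom map_poly_smult map_poly_pCons assms pCons.IH)
  also have "\<dots> = map_poly f (pCons a p) * map_poly f q"
    by (simp add: map_poly_pCons assms)
  finally show ?case .
qed

lemma X_pow_monom: "[:0, 1:] ^ n = monom 1 n"
  by (simp add: monom_altdef)

text \<open>Exchange of the two outermost variables: the coefficient of u^i v^j becomes the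
  coefficient of u^j v^i.  We use it to view a trivariate polynomial as a polynomial in Y.\<close>
definition swap :: "'a::comm_ring_1 poly poly \<Rightarrow> 'a poly poly" where
  "swap p = poly (map_poly (map_poly (\<lambda>r. [:r:])) p) [:[:0, 1:]:]"

lemma coeff_swap: "coeff (coeff (swap p) i) j = coeff (coeff p j) i"
proof -
  have expand: "swap p = (\<Sum>n\<le>degree p. smult (monom 1 n) (map_poly (\<lambda>r. [:r:]) (coeff p n)))"
    unfolding swap_def
    by (subst poly_altdef) (simp add: degree_map_poly map_poly_eq_0_iff coeff_map_poly
         poly_const_pow X_pow_monom degree_map_poly[where f="map_poly (\<lambda>r. [:r:])"])
  have select: "(\<Sum>n\<le>N. g n * (if n = j then 1 else 0)) = (if j \<le> N then g j else 0)"
    for g :: "nat \<Rightarrow> 'a" and N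
  proof -
    have "(\<Sum>n\<le>N. g n * (if n = j then 1 else 0)) = (\<Sum>n\<le>N. if n = j then g n else 0)"
      by (intro sum.cong) auto
    then show ?thesis by simp
  qed
  have "coeff (coeff (swap p) i) j = (\<Sum>n\<le>degree p. coeff (coeff p n) i * (if n = j then 1 else 0))"
    unfolding expand by (simp add: coeff_sum coeff_map_poly coeff_monom)
  also have "\<dots> = coeff (coeff p j) i"
    unfolding select by (auto simp: coeff_eq_0)
  finally show ?thesis .
qed

lemma swap_eqI: "(\<And>i j. coeff (coeff p j) i = coeff (coeff q i) j) \<Longrightarrow> swap p = q"
  by (intro poly_eqI) (simp add: coeff_swap poly_eq_iff)

lemma swap_swap [simp]: "swap (swap p) = p"
  by (intro swap_eqI) (simp add: coeff_swap)

lemma swap_mult: "swap (p * q) = swap p * swap q"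
proof -
  let ?c = "map_poly (\<lambda>r. [:r:]) :: 'a poly \<Rightarrow> 'a poly poly"
  have add: "?c (x + y) = ?c x + ?c y" for x y
    by (rule map_poly_add_hom) auto
  have mult: "?c (x * y) = ?c x * ?c y" for x y
    by (rule map_poly_mult_hom) auto
  have "map_poly ?c (p * q) = map_poly ?c p * map_poly ?c q"
    by (rule map_poly_mult_hom) (auto simp: add mult)
  then show ?thesis
    unfolding swap_def by (simp add: poly_mult)
qed

lemma swap_add: "swap (p + q) = swap p + swap q"
  by (intro swap_eqI) (simp add: coeff_swap)

lemma swap_diff: "swap (p - q) = swap p - swap q"
  by (intro swap_eqI) (simp add: coeff_swap)

lemma swap_0 [simp]: "swap 0 = 0"
  by (intro swap_eqI) (simp add: coeff_swap)

lemma swap_1 [simp]: "swap 1 = 1"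
  by (intro swap_eqI) (auto simp: coeff_swap coeff_1)

lemma swap_power: "swap (p ^ n) = swap p ^ n"
  by (induction n) (simp_all add: swap_mult)

lemma swap_const: "swap [:[:c:]:] = [:[:c:]:]"
  by (intro swap_eqI) (auto simp: coeff_swap coeff_pCons split: nat.splits)

lemma swap_inner_var: "swap [:[:0, 1:]:] = [:0, 1:]"
  by (intro swap_eqI) (auto simp: coeff_swap coeff_pCons split: nat.splits)

lemma swap_outer_var: "swap [:0, 1:] = [:[:0, 1:]:]"
  by (intro swap_eqI) (auto simp: coeff_swap coeff_pCons split: nat.splits)

text \<open>A multiplicative involution is a ring automorphism as far as divisibility is concerned,
  so it reflects irreducibility and coprimality.\<close>
lemma involution_unit:
  assumes mult: "\<And>x y. \<phi> (x * y) = \<phi> x * \<phi> y" and one: "\<phi> 1 = 1" and "is_unit u"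
  shows "is_unit (\<phi> u)"
proof -
  from \<open>is_unit u\<close> obtain v where "1 = u * v" by (auto elim: dvdE)
  then have "1 = \<phi> u * \<phi> v" by (metis mult one)
  then show ?thesis by (rule dvdI)
qed

lemma irreducible_involution:
  fixes \<phi> :: "'a::algebraic_semidom \<Rightarrow> 'a"
  assumes inv: "\<And>x. \<phi> (\<phi> x) = x" and mult: "\<And>x y. \<phi> (x * y) = \<phi> x * \<phi> y"
    and one: "\<phi> 1 = 1" and zero: "\<phi> 0 = 0" and irr: "irreducible (\<phi> x)"
  shows "irreducible x"
proof (rule irreducibleI)
  have unit_back: "is_unit y" if "is_unit (\<phi> y)" for y
    using involution_unit[of \<phi> "\<phi> y", OF mult one that] by (simp only: inv)
  show "x \<noteq> 0" using irr zero by auto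
  show "\<not> is_unit x"
  proof
    assume "is_unit x"
    then have "is_unit (\<phi> x)" by (rule involution_unit[of \<phi>, OF mult one])
    then show False using irr irreducible_not_unit by blast
  qed
  fix a b assume "x = a * b"
  then have "\<phi> x = \<phi> a * \<phi> b" by (simp only: mult)
  then have "is_unit (\<phi> a) \<or> is_unit (\<phi> b)" by (rule irreducibleD[OF irr])
  then show "is_unit a \<or> is_unit b" using unit_back by blast
qed

lemma coprime_involution:
  fixes \<phi> :: "'a::algebraic_semidom \<Rightarrow> 'a"
  assumes inv: "\<And>x. \<phi> (\<phi> x) = x" and mult: "\<And>x y. \<phi> (x * y) = \<phi> x * \<phi> y"
    and one: "\<phi> 1 = 1" and cop: "coprime (\<phi> a) (\<phi> b)"
  shows "coprime a b"
proof (rule coprimeI)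
  fix c assume "c dvd a" "c dvd b"
  then have "\<phi> c dvd \<phi> a" "\<phi> c dvd \<phi> b" by (auto elim!: dvdE simp only: mult intro: dvdI)
  then have "is_unit (\<phi> c)" using cop coprime_common_divisor by blast
  then show "is_unit c"
    using involution_unit[of \<phi> "\<phi> c", OF mult one] by (simp only: inv)
qed

lemma irreducible_swap: "irreducible (swap p) \<Longrightarrow> irreducible (p :: 'a::idom_divide poly poly)"
  by (rule irreducible_involution[where \<phi>=swap]) (simp_all add: swap_mult)

lemma coprime_swap:
  "coprime (swap a) (swap b) \<Longrightarrow> coprime (a :: 'a::idom_divide poly poly) b"
  by (rule coprime_involution[where \<phi>=swap]) (simp_all add: swap_mult)

lemma not_irreducible_nonconstant_product:
  fixes u v :: "'a::idom_divide poly"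
  assumes "degree u \<ge> 1" "degree v \<ge> 1"
  shows "\<not> irreducible (u * v)"
proof
  have const: "degree w = 0" if "is_unit w" for w :: "'a poly"
    using that by (auto simp: is_unit_poly_iff)
  assume "irreducible (u * v)"
  then have "is_unit u \<or> is_unit v" by (rule irreducibleD) (rule refl)
  then show False using assms const by fastforce
qed

lemma power_degree_one:
  fixes p :: "'a::idom poly"
  assumes "degree (p ^ e) = 1"
  shows "e = 1"
proof -
  have "p \<noteq> 0" using assms by (cases e) auto
  then have "e * degree p = 1" using assms by (simp add: degree_power_eq)
  then show ?thesis by simp
qed


section \<open>The example and its first integral\<close>

definition fK :: "nat \<Rightarrow> bpoly" where "fK k = varY * (varX ^ k - 1) + varX"
definition AK :: "nat \<Rightarrow> bpoly" where "AK k = varX ^ k - 1"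
definition BK :: "nat \<Rightarrow> bpoly" where "BK k = - (constB (of_nat k) * varX ^ (k - 1) * varY + 1)"

lemma const_minus_1: "[:a:] - 1 = [:a - 1:]"
  by (simp add: one_pCons)

lemma fK_explicit: "fK k = [:[:0, 1:], monom 1 k - 1:]"
  by (simp add: fK_def varX_def varY_def poly_const_pow X_pow_monom const_minus_1)

lemma AK_explicit: "AK k = [:monom 1 k - 1:]"
  by (simp add: AK_def varX_def poly_const_pow X_pow_monom const_minus_1)

lemma BK_explicit: "BK k = [:-1, - smult (of_nat k) (monom 1 (k - 1)):]"
  by (simp add: BK_def varX_def varY_def constB_def poly_const_pow X_pow_monom one_pCons
      smult_monom)

lemma degree_fK:
  assumes "k \<ge> 1"
  shows "degree (fK k) = 1"
proof -
  have "coeff (monom 1 k :: complex poly) k \<noteq> coeff 1 k"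
    using assms by (simp add: coeff_monom coeff_1)
  then have "monom 1 k \<noteq> (1 :: complex poly)" by metis
  then show ?thesis unfolding fK_explicit by simp
qed

text \<open>D(f) = (X^k - 1)(1 + k X^(k-1) Y) - (k X^(k-1) Y + 1)(X^k - 1) = 0.\<close>
lemma first_integral:
  assumes k: "k \<ge> 1"
  shows "poly_first_integral (AK k) (BK k) (fK k)"
proof -
  have dXf: "dX (fK k) = [:1, smult (of_nat k) (monom 1 (k - 1)):]"
    unfolding dX_def fK_explicit
    by (simp add: map_poly_pCons pderiv_monom pderiv_pCons pderiv_diff smult_monom)
  have dYf: "dY (fK k) = [:monom 1 k - 1:]"
    unfolding dY_def fK_explicit by (simp add: pderiv_pCons)
  show ?thesis
    unfolding poly_first_integral_def derivD_def dXf dYf AK_explicit BK_explicit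
    by (simp add: algebra_simps)
qed


section \<open>The Newton-polygon count \<open>\<B> = k\<close>\<close>

lemma bpoly_nonroot:
  fixes Q :: bpoly
  assumes "Q \<noteq> 0"
  obtains x y where "poly (poly Q [:y:]) x \<noteq> 0"
proof -
  have "finite {c. poly Q c = 0}" using assms by (rule poly_roots_finite)
  then have "finite ((\<lambda>y. [:y:]) -` {c. poly Q c = 0})"
    by (rule finite_vimageI) (auto simp: inj_on_def)
  then have "(\<lambda>y. [:y:]) -` {c. poly Q c = 0} \<noteq> (UNIV :: complex set)"
    using infinite_UNIV_char_0 by auto
  then obtain y where y: "poly Q [:y:] \<noteq> 0" by auto
  have "finite {x. poly (poly Q [:y:]) x = 0}" using y by (rule poly_roots_finite)
  then have "{x. poly (poly Q [:y:]) x = 0} \<noteq> (UNIV :: complex set)"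
    using infinite_UNIV_char_0 by auto
  then obtain x where "poly (poly Q [:y:]) x \<noteq> 0" by auto
  then show thesis by (rule that)
qed

text \<open>Two generic properties hold simultaneously somewhere, so the generic value of a
  quantity is unique and \<open>calB\<close> is well defined once a generic value is exhibited.\<close>
lemma generic_value_unique:
  assumes "generic (\<lambda>x y. F x y = n)" "generic (\<lambda>x y. F x y = n')"
  shows "n = n'"
proof -
  obtain q where q: "q \<noteq> 0" "\<And>x y. poly (poly q [:y:]) x \<noteq> 0 \<Longrightarrow> F x y = n"
    using assms(1) unfolding generic_def by blast
  obtain q' where q': "q' \<noteq> 0" "\<And>x y. poly (poly q' [:y:]) x \<noteq> 0 \<Longrightarrow> F x y = n'"
    using assms(2) unfolding generic_def by blast
  have "q * q' \<noteq> 0" using q(1) q'(1) by simp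
  then obtain x y where "poly (poly (q * q') [:y:]) x \<noteq> 0" by (rule bpoly_nonroot)
  then have "poly (poly q [:y:]) x \<noteq> 0" "poly (poly q' [:y:]) x \<noteq> 0"
    by (auto simp: poly_mult)
  then show ?thesis using q(2) q'(2) by metis
qed

lemma calB_eqI:
  assumes "generic (\<lambda>x y. lattice_count A B x y = n)"
  shows "calB A B = n"
  unfolding calB_def
proof (rule the_equality)
  show "generic (\<lambda>x y. lattice_count A B x y = n)" by (rule assms)
  show "m = n" if "generic (\<lambda>x y. lattice_count A B x y = m)" for m
    using generic_value_unique[OF that assms] .
qed

lemma icoeff_AK:
  assumes k: "k \<ge> 1"
  shows "icoeff (AK k) (a + 1) b
    = (if b = 0 \<and> a + 1 = int k then 1 else 0) - (if b = 0 \<and> a + 1 = 0 then 1 else 0)"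
  using k unfolding icoeff_def bcoeff_def AK_explicit
  by (auto simp: coeff_monom coeff_1 coeff_pCons nat_eq_iff split: nat.splits)

lemma icoeff_BK:
  assumes k: "k \<ge> 1"
  shows "icoeff (BK k) a (b + 1)
    = (if b = -1 \<and> a = 0 then -1 else 0) + (if b = 0 \<and> a = int k - 1 then - of_nat k else 0)"
  using k unfolding icoeff_def bcoeff_def BK_explicit
  by (auto simp: coeff_monom coeff_pCons nat_eq_iff split: nat.splits)

text \<open>x A/X + y B/Y = x X^(k-1) - x X^(-1) - y Y^(-1) - k y X^(k-1), whose monomials survive
  unless x = k y.\<close>
lemma support_AK_BK:
  assumes k: "k \<ge> 1" and x: "x \<noteq> 0" and y: "y \<noteq> 0" and xy: "x \<noteq> of_nat k * y"
  shows "laurent_support (AK k) (BK k) x y = {(-1, 0), (int k - 1, 0), (0, -1)}"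
  unfolding laurent_support_def icoeff_AK[OF k] icoeff_BK[OF k]
  using k x y xy by (auto simp: algebra_simps)

lemma hull_lattice_points:
  assumes k: "k \<ge> 1"
  shows "{p :: nat \<times> nat. (real (fst p), real (snd p))
            \<in> convex hull {(-1, 0), (real k - 1, 0), (0, -1)}}
     = (\<lambda>i. (i, 0)) ` {..<k}"
proof (intro set_eqI iffI)
  let ?H = "convex hull {(-1, 0), (real k - 1, 0), (0 :: real, -1 :: real)}"
  let ?C = "{p :: real \<times> real. (0, 1) \<bullet> p \<le> 0} \<inter> {p. (1, 0) \<bullet> p \<le> real k - 1}"
  fix p :: "nat \<times> nat"
  assume "p \<in> {p. (real (fst p), real (snd p)) \<in> ?H}"
  then have pH: "(real (fst p), real (snd p)) \<in> ?H" by simp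
  have "?H \<subseteq> ?C"
    by (rule hull_minimal)
      (use k in \<open>auto intro!: convex_Int convex_halfspace_le simp: inner_Pair\<close>)
  then have "(real (fst p), real (snd p)) \<in> ?C" using pH by blast
  then have "real (snd p) \<le> 0" "real (fst p) \<le> real k - 1" by (auto simp: inner_Pair)
  then have "snd p = 0" "fst p < k" using k by linarith+
  then show "p \<in> (\<lambda>i. (i, 0)) ` {..<k}"
    by (intro image_eqI[of _ _ "fst p"]) (auto simp: prod_eq_iff)
next
  let ?H = "convex hull {(-1, 0), (real k - 1, 0), (0 :: real, -1 :: real)}"
  fix p :: "nat \<times> nat"
  assume "p \<in> (\<lambda>i. (i, 0)) ` {..<k}"
  then obtain i where p: "p = (i, 0)" "i < k" by auto
  define u where "u = (real i + 1) / real k"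
  have u: "0 \<le> u" "u \<le> 1" using p(2) by (auto simp: u_def field_simps)
  have "(1 - u) *\<^sub>R (-1, 0) + u *\<^sub>R (real k - 1, 0) \<in> ?H"
    by (rule convexD_alt[OF convex_convex_hull]) (use u in \<open>auto intro: hull_inc\<close>)
  moreover have "(1 - u) *\<^sub>R (-1, 0) + u *\<^sub>R (real k - 1, 0) = (real i, 0 :: real)"
    using k by (simp add: u_def field_simps)
  ultimately show "p \<in> {p. (real (fst p), real (snd p)) \<in> ?H}" using p by simp
qed

lemma lattice_count_AK_BK:
  assumes k: "k \<ge> 1" and "x \<noteq> 0" "y \<noteq> 0" "x \<noteq> of_nat k * y"
  shows "lattice_count (AK k) (BK k) x y = k"
proof -
  have "newton_polygon (AK k) (BK k) x y = convex hull {(-1, 0), (real k - 1, 0), (0, -1)}"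
    unfolding newton_polygon_def support_AK_BK[OF assms] using k by (simp add: of_nat_diff)
  then show ?thesis
    unfolding lattice_count_def using hull_lattice_points[OF k]
    by (simp add: card_image inj_on_def)
qed

lemma calB_AK_BK:
  assumes k: "k \<ge> 1"
  shows "calB (AK k) (BK k) = k"
proof (rule calB_eqI)
  define q where "q = varX * varY * (varX - constB (of_nat k) * varY)"
  have eval: "poly (poly q [:y:]) x = x * y * (x - of_nat k * y)" for x y
    unfolding q_def by (simp add: varX_def varY_def constB_def poly_mult algebra_simps)
  have "(of_nat k + 1 :: complex) = of_nat (Suc k)" by simp
  then have "(of_nat k + 1 :: complex) \<noteq> 0" by (metis of_nat_eq_0_iff nat.distinct(1))
  then have "poly (poly q [:1:]) (of_nat k + 1) \<noteq> 0" unfolding eval by simp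
  then have "q \<noteq> 0" by auto
  moreover have "lattice_count (AK k) (BK k) x y = k" if "poly (poly q [:y:]) x \<noteq> 0" for x y
    using that unfolding eval by (intro lattice_count_AK_BK[OF k]) auto
  ultimately show "generic (\<lambda>x y. lattice_count (AK k) (BK k) x y = k)"
    unfolding generic_def by blast
qed


section \<open>Homogenisation and the pencil \<open>\<lambda> f\<^sup>h - \<mu> Z\<^sup>k\<^sup>+\<^sup>1\<close>\<close>

lemma bcoeff_fK:
  assumes "k \<ge> 1"
  shows "bcoeff (fK k) i j = (if (i, j) = (1, 0) \<or> (i, j) = (k, 1) then 1
     else if (i, j) = (0, 1) then -1 else 0)"
  using assms
  by (auto simp: bcoeff_def fK_explicit coeff_pCons coeff_monom split: nat.splits)

lemma bcoeff_fK_nonzero: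
  assumes "k \<ge> 1"
  shows "bcoeff (fK k) i j \<noteq> 0 \<longleftrightarrow> (i, j) \<in> {(1, 0), (k, 1), (0, 1)}"
  using assms by (auto simp: bcoeff_fK)

lemma tdeg_fK:
  assumes k: "k \<ge> 1"
  shows "tdeg (fK k) = k + 1"
proof -
  have "{i + j | i j. bcoeff (fK k) i j \<noteq> 0} = {1, k + 1}"
  proof (intro set_eqI iffI)
    fix s assume "s \<in> {i + j | i j. bcoeff (fK k) i j \<noteq> 0}"
    then show "s \<in> {1, k + 1}" using k by (auto simp: bcoeff_fK_nonzero)
  next
    fix s assume "s \<in> {1, k + 1}"
    then have "s = 1 + 0 \<and> bcoeff (fK k) 1 0 \<noteq> 0 \<or> s = k + 1 \<and> bcoeff (fK k) k 1 \<noteq> 0"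
      using k by (auto simp: bcoeff_fK_nonzero)
    then show "s \<in> {i + j | i j. bcoeff (fK k) i j \<noteq> 0}" by blast
  qed
  then show ?thesis unfolding tdeg_def by (intro Max_eqI) auto
qed

lemma tdeg_1: "tdeg 1 = 0"
proof -
  have "{i + j | i j. bcoeff 1 i j \<noteq> 0} = {0}"
    by (auto simp: bcoeff_def coeff_1 split: if_splits)
  then show ?thesis unfolding tdeg_def by simp
qed

lemma double_sum_support:
  fixes g :: "nat \<Rightarrow> nat \<Rightarrow> 'a::comm_monoid_add"
  assumes "S \<subseteq> {..d} \<times> {..d}" "\<And>i j. (i, j) \<notin> S \<Longrightarrow> g i j = 0"
  shows "(\<Sum>i\<le>d. \<Sum>j\<le>d. g i j) = (\<Sum>(i, j)\<in>S. g i j)"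
proof -
  have "(\<Sum>i\<le>d. \<Sum>j\<le>d. g i j) = (\<Sum>(i, j)\<in>{..d} \<times> {..d}. g i j)"
    by (rule sum.cartesian_product)
  also have "\<dots> = (\<Sum>(i, j)\<in>S. g i j)"
    using assms by (intro sum.mono_neutral_right) auto
  finally show ?thesis .
qed

lemma const3_1 [simp]: "const3 1 = 1"
  by (simp add: const3_def one_pCons)

lemma const3_m1 [simp]: "const3 (-1) = -1"
  by (simp add: const3_def one_pCons)

lemma const3_mult: "const3 a * const3 b = const3 (a * b)"
  by (simp add: const3_def)

lemma const3_power: "const3 a ^ n = const3 (a ^ n)"
  by (simp add: const3_def poly_const_pow)

lemma const3_0 [simp]: "const3 0 = 0"
  by (simp add: const3_def)

lemma const3_unit: "a \<noteq> 0 \<Longrightarrow> is_unit (const3 a)"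
  by (simp add: const3_def is_unit_poly_iff dvd_field_iff)

lemma homog_fK:
  assumes k: "k \<ge> 1"
  shows "homog (k + 1) (fK k) = varX3 * varZ3 ^ k + varY3 * varX3 ^ k - varY3 * varZ3 ^ k"
proof -
  let ?g = "\<lambda>i j. if i + j \<le> k + 1
      then const3 (bcoeff (fK k) i j) * varX3 ^ i * varY3 ^ j * varZ3 ^ (k + 1 - i - j) else 0"
  have "homog (k + 1) (fK k) = (\<Sum>(i, j)\<in>{(1, 0), (k, 1), (0, 1)}. ?g i j)"
    unfolding homog_def
    by (rule double_sum_support) (use k in \<open>auto simp: bcoeff_fK_nonzero const3_def\<close>)
  also have "\<dots> = varX3 * varZ3 ^ k + varY3 * varX3 ^ k - varY3 * varZ3 ^ k"
    using k by (simp add: bcoeff_fK algebra_simps)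
  finally show ?thesis .
qed

lemma homog_1: "homog d 1 = varZ3 ^ d"
proof -
  let ?g = "\<lambda>i j. if i + j \<le> d
      then const3 (bcoeff 1 i j) * varX3 ^ i * varY3 ^ j * varZ3 ^ (d - i - j) else 0"
  have "homog d 1 = (\<Sum>(i, j)\<in>{(0, 0)}. ?g i j)"
    unfolding homog_def
    by (rule double_sum_support) (auto simp: bcoeff_def coeff_1 const3_def)
  also have "\<dots> = varZ3 ^ d"
    by (simp add: bcoeff_def)
  finally show ?thesis .
qed

lemma pencil_fK:
  assumes k: "k \<ge> 1"
  shows "pencil (fK k) 1 l m
    = const3 l * (varX3 * varZ3 ^ k + varY3 * varX3 ^ k - varY3 * varZ3 ^ k)
      - const3 m * varZ3 ^ (k + 1)"
proof -
  have "max (tdeg (fK k)) (tdeg 1) = k + 1" using k by (simp add: tdeg_fK tdeg_1)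
  then show ?thesis
    unfolding pencil_def Let_def by (simp only: homog_fK[OF k] homog_1)
qed

lemma pencil_scale:
  assumes k: "k \<ge> 1" and l: "l \<noteq> 0"
  shows "pencil (fK k) 1 l m = const3 l * pencil (fK k) 1 1 (m / l)"
  using l unfolding pencil_fK[OF k] by (simp add: algebra_simps const3_mult)

lemma coeff_pencil:
  assumes k: "k \<ge> 1"
  shows "coeff (pencil (fK k) 1 l m) (k + 1) = - [:[:m:]:]"
    and "coeff (pencil (fK k) 1 l m) 0 = [:[:l:]:] * [:0, [:0, 1:] ^ k:]"
  using k unfolding pencil_fK[OF k]
  by (simp_all add: varX3_def varY3_def varZ3_def const3_def X_pow_monom coeff_monom
      poly_const_pow flip: monom_altdef)


section \<open>The spectrum\<close>

text \<open>In C[Z][X] (X outer), X^k - Z^k is coprime to Z^k (X - \<mu> Z) unless \<mu> is a k-th root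
  of unity: Z and X - \<mu> Z are primes, and neither divides X^k - Z^k.\<close>
lemma coprime_power_difference:
  fixes \<mu> :: complex
  assumes k: "k \<ge> 1" and mu: "\<mu> ^ k \<noteq> 1"
  defines "z \<equiv> [:0, 1:] :: complex poly"
  shows "coprime ([:0, 1:] ^ k - [:z ^ k:]) ([:z:] ^ k * [:- smult \<mu> z, 1:])"
proof -
  let ?a = "[:0, 1:] ^ k - [:z ^ k:] :: complex poly poly"
  let ?L = "[:- smult \<mu> z, 1:]"
  have prime_z: "prime_elem [:z:]"
    unfolding z_def by (simp add: prime_elem_const_poly_iff prime_elem_linear_field_poly)
  have prime_L: "prime_elem ?L"
    by (rule prime_elem_linear_poly) auto
  have "coeff ?a k = 1"
    using k by (cases k) (simp_all add: X_pow_monom coeff_monom)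
  moreover have "\<not> z dvd 1"
    unfolding z_def by (simp add: is_unit_poly_iff)
  ultimately have z_ndvd: "\<not> [:z:] dvd ?a"
    by (metis const_poly_dvd_iff)
  have "poly ?a (smult \<mu> z) = smult (\<mu> ^ k - 1) (z ^ k)"
    by (simp add: algebra_simps smult_power smult_diff_left)
  also have "\<dots> \<noteq> 0"
    using mu by (simp add: z_def)
  finally have L_ndvd: "\<not> ?L dvd ?a"
    by (simp only: poly_eq_0_iff_dvd not_False_eq_True)
  have "coprime ?a ([:z:] ^ k)"
    by (rule prime_elem_imp_power_coprime[OF prime_z z_ndvd])
  moreover have "coprime ?a ?L"
    using prime_elem_imp_coprime[OF prime_L L_ndvd] by (simp add: coprime_commute)
  ultimately show ?thesis using coprime_mult_right_iff by blast
qed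

text \<open>For \<mu>^k \<noteq> 1 the member (1 : \<mu>) of the pencil is Y (X^k - Z^k) + Z^k (X - \<mu> Z):
  linear in Y with coprime coefficients, hence irreducible.\<close>
lemma irreducible_pencil:
  fixes \<mu> :: complex
  assumes k: "k \<ge> 1" and mu: "\<mu> ^ k \<noteq> 1"
  shows "irreducible (pencil (fK k) 1 1 \<mu>)"
proof -
  define z :: "complex poly" where "z = [:0, 1:]"
  define a :: bpoly where "a = [:z:] ^ k - [:0, 1:] ^ k"
  define b :: bpoly where "b = [:z:] * [:0, 1:] ^ k - [:[:\<mu>:]:] * [:0, 1:] ^ (k + 1)"
  have "swap a = [:0, 1:] ^ k - [:z ^ k:]"
    unfolding a_def z_def
    by (simp only: swap_diff swap_power swap_inner_var swap_outer_var) (simp add: poly_const_pow)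
  moreover have "swap b = [:z:] ^ k * [:- smult \<mu> z, 1:]"
    unfolding b_def z_def
    by (simp only: swap_diff swap_power swap_mult swap_inner_var swap_outer_var swap_const)
      (simp add: poly_const_pow)
  ultimately have "coprime (swap a) (swap b)"
    using coprime_power_difference[OF k mu] by (simp add: z_def)
  then have "coprime a b" by (rule coprime_swap)
  then have "coprime b a" using coprime_commute by blast
  moreover have "a \<noteq> 0"
  proof -
    have "coeff a k = -1"
      unfolding a_def using k by (cases k) (simp_all add: poly_const_pow X_pow_monom coeff_monom)
    then show ?thesis by auto
  qed
  ultimately have irr: "irreducible [:b, a:]"
    by (intro irreducible_linear_poly)
  have swap3: "swap varX3 = varX3" "swap varY3 = [:0, 1:]" "swap varZ3 = [:[:0, 1:]:]"
      "swap (const3 c) = const3 c" for c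
    unfolding varX3_def varY3_def varZ3_def const3_def
    by (simp_all only: swap_inner_var swap_outer_var swap_const)
  have "swap (pencil (fK k) 1 1 \<mu>) = varX3 * [:[:0, 1:]:] ^ k + [:0, 1:] * varX3 ^ k
      - [:0, 1:] * [:[:0, 1:]:] ^ k - const3 \<mu> * [:[:0, 1:]:] ^ (k + 1)"
    unfolding pencil_fK[OF k] const3_1 mult_1
    by (simp only: swap_diff swap_add swap_power swap_mult swap3)
  also have "\<dots> = [:b, a:]"
    unfolding a_def b_def z_def varX3_def const3_def by (simp add: poly_const_pow)
  finally have "irreducible (swap (pencil (fK k) 1 1 \<mu>))"
    using irr by simp
  then show ?thesis by (rule irreducible_swap)
qed

text \<open>For \<omega>^k = 1 the member (1 : \<omega>) factors as
  (X - \<omega> Z) (Y (X^(k-1) + \<dots> + (\<omega> Z)^(k-1)) + Z^k).\<close>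
lemma reducible_pencil_root_of_unity:
  assumes k: "k \<ge> 1" and om: "\<omega> ^ k = 1"
  shows "\<not> irreducible (pencil (fK k) 1 1 \<omega>)"
proof -
  have om0: "\<omega> \<noteq> 0" using om k by (cases k) auto
  define L where "L = varX3 - const3 \<omega> * varZ3"
  define S where "S = (\<Sum>i<k. (const3 \<omega> * varZ3) ^ (k - Suc i) * varX3 ^ i)"
  define M where "M = varY3 * S + varZ3 ^ k"
  have LS: "L * S = varX3 ^ k - varZ3 ^ k"
  proof -
    have "L * S = varX3 ^ k - (const3 \<omega> * varZ3) ^ k"
      unfolding L_def S_def by (rule power_diff_sumr2[symmetric])
    also have "(const3 \<omega> * varZ3) ^ k = varZ3 ^ k"
      unfolding power_mult_distrib const3_power om by simp
    finally show ?thesis .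
  qed
  have factor: "pencil (fK k) 1 1 \<omega> = L * M"
  proof -
    have "L * M = varY3 * (L * S) + L * varZ3 ^ k"
      unfolding M_def by (simp add: distrib_left mult.left_commute)
    also have "\<dots> = varY3 * (varX3 ^ k - varZ3 ^ k) + (varX3 - const3 \<omega> * varZ3) * varZ3 ^ k"
      unfolding LS by (simp only: L_def)
    also have "\<dots> = pencil (fK k) 1 1 \<omega>"
      unfolding pencil_fK[OF k] by (simp add: algebra_simps)
    finally show ?thesis by simp
  qed
  have degL: "degree L = 1"
    unfolding L_def using om0 by (simp add: varX3_def varZ3_def const3_def)
  have "coeff (pencil (fK k) 1 1 \<omega>) (k + 1) \<noteq> 0"
    using coeff_pencil(1)[OF k] om0 by simp
  then have "k + 1 \<le> degree (L * M)" unfolding factor by (rule le_degree)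
  moreover have "degree (L * M) \<le> 1 + degree M"
    using degree_mult_le[of L M] degL by simp
  ultimately have "degree M \<ge> 1" using k by linarith
  then show ?thesis
    unfolding factor using degL by (intro not_irreducible_nonconstant_product) simp_all
qed

lemma pencil_at_infinity:
  assumes k: "k \<ge> 1"
  shows "pencil (fK k) 1 0 m = (- const3 m * varZ3) * varZ3 ^ k"
  unfolding pencil_fK[OF k] by (simp add: mult.assoc)

lemma reducible_pencil_infinity:
  assumes k: "k \<ge> 1" and m: "m \<noteq> 0"
  shows "\<not> irreducible (pencil (fK k) 1 0 m)"
  unfolding pencil_at_infinity[OF k] using k m
  by (intro not_irreducible_nonconstant_product)
    (simp_all add: const3_def varZ3_def degree_power_eq)

lemma pencil_infinity_power:
  assumes k: "k \<ge> 1"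
  obtains P :: tpoly where "pencil (fK k) 1 0 1 = P ^ (k + 1)"
proof -
  obtain c :: complex where c: "c ^ (k + 1) = - 1"
    using nth_root_exists[of "k + 1" "-1"] by auto
  have "pencil (fK k) 1 0 1 = (const3 c * varZ3) ^ (k + 1)"
    unfolding pencil_fK[OF k] power_mult_distrib const3_power c by simp
  then show thesis by (rule that)
qed

text \<open>No member with \<lambda> \<noteq> 0 is a proper power: its Z-free coefficient has Y-degree one.\<close>
lemma pencil_not_power:
  assumes k: "k \<ge> 1" and l: "l \<noteq> 0" and eq: "pencil (fK k) 1 l m = P ^ e"
  shows "e = 1"
proof (rule power_degree_one)
  have "coeff P 0 ^ e = [:[:l:]:] * [:0, [:0, 1:] ^ k:]"
    using arg_cong[OF eq, of "\<lambda>p. coeff p 0"] coeff_pencil(2)[OF k] by (simp add: coeff_0_power)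
  then show "degree (coeff P 0 ^ e) = 1"
    using l by simp
qed

lemma proj_pt_rescale:
  assumes c: "c \<noteq> 0"
  shows "proj_pt (c * l) (c * m) = proj_pt l m"
  unfolding proj_pt_def
proof (intro set_eqI iffI)
  fix x assume "x \<in> {(d * (c * l), d * (c * m)) |d. d \<noteq> 0}"
  then obtain d where x: "x = (d * (c * l), d * (c * m))" "d \<noteq> 0" by blast
  show "x \<in> {(d * l, d * m) |d. d \<noteq> 0}"
    using c x by (intro CollectI exI[of _ "d * c"]) (simp add: mult.assoc)
next
  fix x assume "x \<in> {(d * l, d * m) |d. d \<noteq> 0}"
  then obtain d where x: "x = (d * l, d * m)" "d \<noteq> 0" by blast
  show "x \<in> {(d * (c * l), d * (c * m)) |d. d \<noteq> 0}"
    using c x by (intro CollectI exI[of _ "d / c"]) simp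
qed

lemma proj_pt_finite: "l \<noteq> 0 \<Longrightarrow> proj_pt l m = proj_pt 1 (m / l)"
  using proj_pt_rescale[of l 1 "m / l"] by simp

lemma proj_pt_infinity: "m \<noteq> 0 \<Longrightarrow> proj_pt 0 m = proj_pt 0 1"
  using proj_pt_rescale[of m 0 1] by simp

lemma proj_pt_mem: "(1, a) \<in> proj_pt 1 a"
  unfolding proj_pt_def by (intro CollectI exI[of _ 1]) auto

lemma proj_pt_inj:
  assumes "proj_pt 1 a = proj_pt 1 b"
  shows "a = b"
proof -
  have "(1, a) \<in> proj_pt 1 b" using proj_pt_mem[of a] assms by simp
  then show ?thesis unfolding proj_pt_def by auto
qed

lemma proj_pt_finite_ne_infinity: "proj_pt 1 a \<noteq> proj_pt 0 1"
proof
  assume "proj_pt 1 a = proj_pt 0 1"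
  then have "(1, a) \<in> proj_pt 0 1" using proj_pt_mem[of a] by simp
  then show False unfolding proj_pt_def by auto
qed

lemma proj_pt_cases:
  assumes "(l, m) \<noteq> (0, 0)"
  obtains "l \<noteq> 0" "proj_pt l m = proj_pt 1 (m / l)" | "l = 0" "proj_pt l m = proj_pt 0 1"
proof (cases "l = 0")
  case True
  then have "m \<noteq> 0" using assms by simp
  then have "proj_pt l m = proj_pt 0 1" using True proj_pt_infinity[of m] by simp
  with True show thesis by (rule that(2))
next
  case False
  show thesis by (rule that(1)[OF False proj_pt_finite[OF False]])
qed

lemma sigma_fK:
  assumes k: "k \<ge> 1"
  shows "spectrum_sigma (fK k) 1 = {proj_pt 1 \<omega> | \<omega>. \<omega> ^ k = 1} \<union> {proj_pt 0 1}"
proof (intro set_eqI iffI)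
  fix x assume "x \<in> spectrum_sigma (fK k) 1"
  then obtain l m where x: "x = proj_pt l m" "(l, m) \<noteq> (0, 0)"
    and red: "\<not> irreducible (pencil (fK k) 1 l m)"
    unfolding spectrum_sigma_def by blast
  from x(2) show "x \<in> {proj_pt 1 \<omega> | \<omega>. \<omega> ^ k = 1} \<union> {proj_pt 0 1}"
  proof (cases rule: proj_pt_cases)
    case 1
    have "\<not> irreducible (pencil (fK k) 1 1 (m / l))"
      using red unfolding pencil_scale[OF k \<open>l \<noteq> 0\<close>]
      by (simp add: irreducible_mult_unit_left[OF const3_unit[OF \<open>l \<noteq> 0\<close>]])
    then have "(m / l) ^ k = 1" using irreducible_pencil[OF k] by blast
    moreover have "x = proj_pt 1 (m / l)" using x(1) 1(2) by simp
    ultimately show ?thesis by blast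
  next
    case 2
    then show ?thesis using x(1) by simp
  qed
next
  fix x assume "x \<in> {proj_pt 1 \<omega> | \<omega>. \<omega> ^ k = 1} \<union> {proj_pt 0 1}"
  then consider \<omega> where "x = proj_pt 1 \<omega>" "\<omega> ^ k = 1" | "x = proj_pt 0 1" by blast
  then show "x \<in> spectrum_sigma (fK k) 1"
  proof cases
    case 1
    have "\<not> irreducible (pencil (fK k) 1 1 \<omega>)"
      using reducible_pencil_root_of_unity[OF k 1(2)] .
    then show ?thesis unfolding spectrum_sigma_def 1(1)
      by (intro CollectI exI[of _ 1] exI[of _ \<omega>]) simp
  next
    case 2
    have "\<not> irreducible (pencil (fK k) 1 0 1)"
      using reducible_pencil_infinity[OF k] by simp
    then show ?thesis unfolding spectrum_sigma_def 2
      by (intro CollectI exI[of _ 0] exI[of _ 1]) simp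
  qed
qed

lemma card_sigma_points:
  assumes k: "k \<ge> 1"
  shows "card ({proj_pt 1 \<omega> | \<omega>. \<omega> ^ k = 1} \<union> {proj_pt 0 1}) = k + 1"
proof -
  have eq: "{proj_pt 1 \<omega> | \<omega>. \<omega> ^ k = 1} = proj_pt 1 ` {\<omega>::complex. \<omega> ^ k = 1}"
    by blast
  have inj: "inj_on (proj_pt 1) {\<omega>::complex. \<omega> ^ k = 1}"
    by (rule inj_onI) (rule proj_pt_inj)
  have card: "card {\<omega>::complex. \<omega> ^ k = 1} = k"
    using k by (rule card_complex_roots_unity)
  then have "finite {\<omega>::complex. \<omega> ^ k = 1}"
    using k by (intro card_ge_0_finite) auto
  moreover have "proj_pt 0 1 \<notin> proj_pt 1 ` {\<omega>::complex. \<omega> ^ k = 1}"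
    using proj_pt_finite_ne_infinity by (metis imageE)
  ultimately show ?thesis
    unfolding eq using inj card by (simp add: card_image)
qed

lemma gamma_fK:
  assumes k: "k \<ge> 1"
  shows "spectrum_gamma (fK k) 1 = {proj_pt 0 1}"
proof (intro set_eqI iffI)
  fix x assume "x \<in> spectrum_gamma (fK k) 1"
  then obtain l m P e where x: "x = proj_pt l m" "(l, m) \<noteq> (0, 0)"
    and e: "e > 1" "pencil (fK k) 1 l m = P ^ e"
    unfolding spectrum_gamma_def by blast
  from x(2) show "x \<in> {proj_pt 0 1}"
  proof (cases rule: proj_pt_cases)
    case 1
    then show ?thesis using pencil_not_power[OF k 1(1) e(2)] e(1) by simp
  next
    case 2
    then show ?thesis using x(1) by simp
  qed
next
  fix x assume "x \<in> {proj_pt 0 1}"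
  then have x: "x = proj_pt 0 1" by simp
  obtain P where "pencil (fK k) 1 0 1 = P ^ (k + 1)"
    by (rule pencil_infinity_power[OF k])
  then show "x \<in> spectrum_gamma (fK k) 1"
    unfolding spectrum_gamma_def x using k
    by (intro CollectI exI[of _ 0] exI[of _ 1]) (auto intro!: exI[of _ "k + 1"])
qed


section \<open>Indecomposability\<close>

lemma ratfun_add: "ratfun (a + b) = ratfun a + ratfun b"
  by (simp add: ratfun_def add_fract)

lemma ratfun_mult: "ratfun (a * b) = ratfun a * ratfun b"
  by (simp add: ratfun_def)

lemma ratfun_0 [simp]: "ratfun 0 = 0"
  by (simp add: ratfun_def Zero_fract_def)

lemma ratfun_1 [simp]: "ratfun 1 = 1"
  by (simp add: ratfun_def One_fract_def)

lemma ratfun_power: "ratfun (a ^ n) = ratfun a ^ n"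
  by (induction n) (simp_all add: ratfun_mult)

lemma ratfun_sum: "ratfun (sum g A) = (\<Sum>i\<in>A. ratfun (g i))"
  by (induction A rule: infinite_finite_induct) (simp_all add: ratfun_add)

lemma ratfun_inj: "ratfun a = ratfun b \<longleftrightarrow> a = b"
  by (simp add: ratfun_def eq_fract)

lemma ratfun_eq_0 [simp]: "ratfun a = 0 \<longleftrightarrow> a = 0"
  by (simp add: ratfun_def Zero_fract_def eq_fract)

lemma Fract_ratfun: "b \<noteq> 0 \<Longrightarrow> Fraction_Field.Fract a b = ratfun a / ratfun b"
  by (simp add: ratfun_def)

lemma constB_add: "constB (a + b) = constB a + constB b" by (simp add: constB_def)
lemma constB_mult: "constB (a * b) = constB a * constB b" by (simp add: constB_def)
lemma constB_uminus: "constB (- a) = - constB a" by (simp add: constB_def)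
lemma constB_eq_0 [simp]: "constB a = 0 \<longleftrightarrow> a = 0" by (simp add: constB_def)
lemma constB_1 [simp]: "constB 1 = 1" by (simp add: constB_def one_pCons)
lemma constB_power: "constB (a ^ n) = constB a ^ n" by (simp add: constB_def poly_const_pow)

lemma constB_sum: "constB (sum g A) = (\<Sum>i\<in>A. constB (g i))"
  by (induction A rule: infinite_finite_induct) (simp_all add: constB_add)

lemma constB_unit: "a \<noteq> 0 \<Longrightarrow> is_unit (constB a)"
  by (simp add: constB_def is_unit_poly_iff dvd_field_iff)

lemma unit_bpoly_const: "is_unit (u :: bpoly) \<Longrightarrow> \<exists>e. e \<noteq> 0 \<and> u = constB e"
  by (auto simp: is_unit_poly_iff constB_def dvd_field_iff)

lemma eval_at_poly: "eval_at p h = poly (map_poly (\<lambda>c. ratfun (constB c)) p) h"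
proof -
  have d: "degree (map_poly (\<lambda>c. ratfun (constB c)) p) = degree p"
    by (rule degree_map_poly) simp
  show ?thesis
    unfolding eval_at_def poly_altdef d by (intro sum.cong) (simp_all add: coeff_map_poly)
qed

lemma eval_at_mult: "eval_at (p * q) h = eval_at p h * eval_at q h"
proof -
  have "map_poly (\<lambda>c. ratfun (constB c)) (p * q)
      = map_poly (\<lambda>c. ratfun (constB c)) p * map_poly (\<lambda>c. ratfun (constB c)) q"
    by (rule map_poly_mult_hom) (simp_all add: constB_add constB_mult ratfun_add ratfun_mult)
  then show ?thesis by (simp add: eval_at_poly poly_mult)
qed

text \<open>The cleared numerator b^d p(a/b) of p(a/b), for d \<ge> deg p.\<close>
definition homog_subst :: "nat \<Rightarrow> complex poly \<Rightarrow> bpoly \<Rightarrow> bpoly \<Rightarrow> bpoly" where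
  "homog_subst d p a b = (\<Sum>i\<le>d. constB (coeff p i) * a ^ i * b ^ (d - i))"

lemma ratfun_homog_subst:
  assumes b: "b \<noteq> 0" and d: "degree p \<le> d"
  shows "ratfun (homog_subst d p a b) = ratfun b ^ d * eval_at p (Fraction_Field.Fract a b)"
proof -
  let ?h = "Fraction_Field.Fract a b" and ?c = "\<lambda>i. ratfun (constB (coeff p i))"
  have "eval_at p ?h = (\<Sum>i\<le>d. ?c i * ?h ^ i)"
    unfolding eval_at_def
    by (rule sum.mono_neutral_left) (use d in \<open>auto simp: coeff_eq_0\<close>)
  then have "ratfun b ^ d * eval_at p ?h = (\<Sum>i\<le>d. ?c i * (ratfun b ^ d * ?h ^ i))"
    by (simp add: sum_distrib_left algebra_simps)
  also have "\<dots> = (\<Sum>i\<le>d. ?c i * ratfun a ^ i * ratfun b ^ (d - i))"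
  proof (intro sum.cong refl)
    fix i assume "i \<in> {..d}"
    then have "ratfun b ^ d = ratfun b ^ i * ratfun b ^ (d - i)"
      by (simp add: power_add[symmetric])
    then show "?c i * (ratfun b ^ d * ?h ^ i) = ?c i * ratfun a ^ i * ratfun b ^ (d - i)"
      using b by (simp add: Fract_ratfun power_divide)
  qed
  also have "\<dots> = ratfun (homog_subst d p a b)"
    unfolding homog_subst_def ratfun_sum by (simp add: ratfun_mult ratfun_power)
  finally show ?thesis by simp
qed

text \<open>Multiplicativity and degree shift, both read off in the fraction field.\<close>
lemma homog_subst_mult:
  assumes b: "b \<noteq> 0" and "degree p1 \<le> d1" "degree p2 \<le> d2"
  shows "homog_subst (d1 + d2) (p1 * p2) a b = homog_subst d1 p1 a b * homog_subst d2 p2 a b"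
proof -
  have "degree (p1 * p2) \<le> d1 + d2" using assms degree_mult_le[of p1 p2] by linarith
  then have "ratfun (homog_subst (d1 + d2) (p1 * p2) a b)
      = ratfun (homog_subst d1 p1 a b * homog_subst d2 p2 a b)"
    using assms by (simp add: ratfun_homog_subst ratfun_mult eval_at_mult power_add algebra_simps)
  then show ?thesis by (simp add: ratfun_inj)
qed

lemma homog_subst_shift:
  assumes b: "b \<noteq> 0" and "degree p \<le> d"
  shows "homog_subst (d + m) p a b = b ^ m * homog_subst d p a b"
proof -
  have "ratfun (homog_subst (d + m) p a b) = ratfun (b ^ m * homog_subst d p a b)"
    using assms by (simp add: ratfun_homog_subst ratfun_mult ratfun_power power_add algebra_simps)
  then show ?thesis by (simp add: ratfun_inj)
qed

lemma homog_subst_linear: "homog_subst 1 [:- \<beta>, 1:] a b = a - constB \<beta> * b"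
  by (simp add: homog_subst_def constB_uminus)

lemma homog_subst_const: "homog_subst 0 [:c:] a b = constB c"
  by (simp add: homog_subst_def)

text \<open>Over C, b^(deg q) q(a/b) = lc(q) \<prod> (a - \<beta> b), so a prime factor of it divides some
  a - \<beta> b with q(\<beta>) = 0.\<close>
lemma prime_dvd_homog_subst:
  assumes b: "b \<noteq> 0" and pr: "prime \<pi>"
  shows "q \<noteq> 0 \<Longrightarrow> \<pi> dvd homog_subst (degree q) q a b
    \<Longrightarrow> \<exists>\<beta>. poly q \<beta> = 0 \<and> \<pi> dvd a - constB \<beta> * b"
proof (induction "degree q" arbitrary: q)
  case 0
  then obtain c where c: "q = [:c:]" by (metis degree_eq_zeroE)
  then have "is_unit (homog_subst (degree q) q a b)"
    using 0 homog_subst_const[of c a b] constB_unit by simp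
  then have "is_unit \<pi>" using 0 dvd_unit_imp_unit by blast
  then show ?case using pr by (simp add: prime_def prime_elem_def)
next
  case (Suc n)
  then have "\<not> constant (poly q)" by (simp add: constant_degree)
  then obtain \<beta> where \<beta>: "poly q \<beta> = 0" using fundamental_theorem_of_algebra by blast
  then obtain q' where q': "q = [:- \<beta>, 1:] * q'"
    by (auto simp: poly_eq_0_iff_dvd elim: dvdE)
  have "q' \<noteq> 0" using Suc.prems q' by auto
  then have dq: "degree q = 1 + degree q'"
    unfolding q' by (subst degree_mult_eq) simp_all
  have "homog_subst (1 + degree q') ([:- \<beta>, 1:] * q') a b
      = homog_subst 1 [:- \<beta>, 1:] a b * homog_subst (degree q') q' a b"
    by (rule homog_subst_mult[OF b]) simp_all
  then have "homog_subst (degree q) q a b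
      = homog_subst 1 [:- \<beta>, 1:] a b * homog_subst (degree q') q' a b"
    by (simp only: dq[symmetric] q'[symmetric])
  then have "\<pi> dvd (a - constB \<beta> * b) * homog_subst (degree q') q' a b"
    using Suc.prems(2) unfolding homog_subst_linear by simp
  then consider "\<pi> dvd a - constB \<beta> * b" | "\<pi> dvd homog_subst (degree q') q' a b"
    using pr prime_dvd_mult_iff by blast
  then show ?case
  proof cases
    case 1
    then show ?thesis using \<beta> by blast
  next
    case 2
    moreover have "n = degree q'" using Suc.hyps(2) dq by simp
    ultimately obtain \<beta>' where "poly q' \<beta>' = 0" "\<pi> dvd a - constB \<beta>' * b"
      using Suc.hyps(1)[of q'] \<open>q' \<noteq> 0\<close> by blast
    then show ?thesis using q' by (intro exI[of _ \<beta>']) simp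
  qed
qed

lemma homog_subst_mod_denominator:
  "b dvd homog_subst (Suc m) p a b - constB (coeff p (Suc m)) * a ^ Suc m"
proof -
  have "homog_subst (Suc m) p a b - constB (coeff p (Suc m)) * a ^ Suc m
      = (\<Sum>i\<le>m. constB (coeff p i) * a ^ i * b ^ (Suc m - i))"
    unfolding homog_subst_def by (simp add: sum.atMost_Suc)
  also have "b dvd \<dots>"
  proof (rule dvd_sum)
    fix i assume "i \<in> {..m}"
    then have "b ^ (Suc m - i) = b * b ^ (m - i)" by (simp add: Suc_diff_le)
    then show "b dvd constB (coeff p i) * a ^ i * b ^ (Suc m - i)" by simp
  qed
  finally show ?thesis .
qed

lemma homog_subst_mod_linear:
  assumes "degree p \<le> n"
  shows "(a - constB \<beta> * b) dvd homog_subst n p a b - constB (poly p \<beta>) * b ^ n"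
proof -
  let ?c = "constB \<beta> * b"
  have pb: "poly p \<beta> = (\<Sum>i\<le>n. coeff p i * \<beta> ^ i)"
    unfolding poly_altdef
    by (rule sum.mono_neutral_left) (use assms in \<open>auto simp: coeff_eq_0\<close>)
  have "constB (poly p \<beta>) * b ^ n = (\<Sum>i\<le>n. constB (coeff p i) * ?c ^ i * b ^ (n - i))"
    unfolding pb constB_sum sum_distrib_right
  proof (intro sum.cong refl)
    fix i assume "i \<in> {..n}"
    then have "b ^ n = b ^ i * b ^ (n - i)" by (simp add: power_add[symmetric])
    then show "constB (coeff p i * \<beta> ^ i) * b ^ n = constB (coeff p i) * ?c ^ i * b ^ (n - i)"
      by (simp add: constB_mult constB_power power_mult_distrib algebra_simps)
  qed
  then have "homog_subst n p a b - constB (poly p \<beta>) * b ^ n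
      = (\<Sum>i\<le>n. constB (coeff p i) * (a ^ i - ?c ^ i) * b ^ (n - i))"
    unfolding homog_subst_def by (simp add: sum_subtractf[symmetric] algebra_simps)
  also have "(a - ?c) dvd \<dots>"
  proof (rule dvd_sum)
    fix i
    have "(a - ?c) dvd (a ^ i - ?c ^ i)" unfolding power_diff_sumr2 by simp
    then show "(a - ?c) dvd constB (coeff p i) * (a ^ i - ?c ^ i) * b ^ (n - i)" by simp
  qed
  finally show ?thesis .
qed

lemma coprime_no_common_root:
  fixes p q :: "complex poly"
  assumes "coprime p q" "poly q \<beta> = 0"
  shows "poly p \<beta> \<noteq> 0"
proof
  assume "poly p \<beta> = 0"
  then have "[:- \<beta>, 1:] dvd p" "[:- \<beta>, 1:] dvd q"
    using assms(2) by (simp_all add: poly_eq_0_iff_dvd)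
  then have "is_unit [:- \<beta>, 1:]" using assms(1) by (rule coprime_common_divisor[rotated])
  then show False by (simp add: is_unit_poly_iff)
qed

lemma coprime_homog_subst:
  assumes pq: "coprime p q" and ab: "coprime a b" and b: "b \<noteq> 0" and q: "q \<noteq> 0"
    and n: "n = max (degree p) (degree q)" and Q: "homog_subst n q a b \<noteq> 0"
  shows "coprime (homog_subst n p a b) (homog_subst n q a b)"
proof (rule coprimeI)
  let ?P = "homog_subst n p a b" and ?Q = "homog_subst n q a b"
  have no_prime: False if pr: "prime \<pi>" and piP: "\<pi> dvd ?P" and piQ: "\<pi> dvd ?Q" for \<pi>
  proof -
    have nu: "\<not> is_unit \<pi>" using pr by (simp add: prime_def prime_elem_def)
    have not_both: False if "\<pi> dvd a" "\<pi> dvd b"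
      using coprime_common_divisor[OF ab that] nu by blast
    have "?Q = b ^ (n - degree q) * homog_subst (degree q) q a b"
      using homog_subst_shift[OF b, of q "degree q" "n - degree q" a] n by simp
    then consider "\<pi> dvd b ^ (n - degree q)" | "\<pi> dvd homog_subst (degree q) q a b"
      using piQ prime_dvd_mult_iff[OF pr] by metis
    then show False
    proof cases
      case 1
      then have "n - degree q \<noteq> 0" using nu by auto
      then have dp: "degree p = n" and "n \<noteq> 0" using n by auto
      then have "p \<noteq> 0" by auto
      then have pn: "coeff p n \<noteq> 0" unfolding dp[symmetric] by simp
      obtain m where m: "n = Suc m" using \<open>n \<noteq> 0\<close> by (cases n) auto
      have pib: "\<pi> dvd b" using 1 pr prime_dvd_power by blast
      have "b dvd ?P - constB (coeff p n) * a ^ n"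
        unfolding m by (rule homog_subst_mod_denominator)
      then have "\<pi> dvd ?P - constB (coeff p n) * a ^ n" using pib dvd_trans by blast
      then have "\<pi> dvd ?P - (?P - constB (coeff p n) * a ^ n)"
        using piP by (rule dvd_diff[rotated])
      then have "\<pi> dvd constB (coeff p n) * a ^ n" by simp
      then have "\<pi> dvd a ^ n" using constB_unit[OF pn] by (simp add: dvd_mult_unit_iff')
      then have "\<pi> dvd a" using pr prime_dvd_power by blast
      then show False using not_both pib by blast
    next
      case 2
      then obtain \<beta> where \<beta>: "poly q \<beta> = 0" "\<pi> dvd a - constB \<beta> * b"
        using prime_dvd_homog_subst[OF b pr q] by blast
      have pb: "poly p \<beta> \<noteq> 0" by (rule coprime_no_common_root[OF pq \<beta>(1)])
      have "degree p \<le> n" using n by simp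
      then have "(a - constB \<beta> * b) dvd ?P - constB (poly p \<beta>) * b ^ n"
        by (rule homog_subst_mod_linear)
      then have "\<pi> dvd ?P - constB (poly p \<beta>) * b ^ n" using \<beta>(2) dvd_trans by blast
      then have "\<pi> dvd ?P - (?P - constB (poly p \<beta>) * b ^ n)"
        using piP by (rule dvd_diff[rotated])
      then have "\<pi> dvd constB (poly p \<beta>) * b ^ n" by simp
      then have "\<pi> dvd b ^ n" using constB_unit[OF pb] by (simp add: dvd_mult_unit_iff')
      then have pib: "\<pi> dvd b" using pr prime_dvd_power by blast
      then have "\<pi> dvd (a - constB \<beta> * b) + constB \<beta> * b" using \<beta>(2) by (intro dvd_add) simp_all
      then show False using not_both pib by simp
    qed
  qed
  fix c assume "c dvd ?P" "c dvd ?Q"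
  show "is_unit c"
  proof (rule ccontr)
    assume "\<not> is_unit c"
    moreover have "c \<noteq> 0" using \<open>c dvd ?Q\<close> Q by auto
    ultimately obtain \<pi> where "\<pi> dvd c" "prime \<pi>" using prime_divisor_exists by blast
    then show False using no_prime[of \<pi>] \<open>c dvd ?P\<close> \<open>c dvd ?Q\<close> dvd_trans by blast
  qed
qed

definition compose :: "complex poly \<Rightarrow> bpoly \<Rightarrow> bpoly" where
  "compose R g = poly (map_poly constB R) g"

lemma degree_compose: "degree (compose R g) = degree R * degree g"
proof -
  have "compose R g = pcompose (map_poly (\<lambda>c. [:c:]) R) g"
    unfolding compose_def pcompose_altdef constB_def[abs_def]
    by (simp add: map_poly_map_poly o_def)
  then show ?thesis by (simp add: degree_pcompose degree_map_poly)
qed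

lemma compose_add: "compose (R + S) g = compose R g + compose S g"
  unfolding compose_def by (simp add: map_poly_add_hom constB_add poly_add)

lemma compose_mult: "compose (R * S) g = compose R g * compose S g"
  unfolding compose_def by (simp add: map_poly_mult_hom constB_add constB_mult poly_mult)

lemma compose_0 [simp]: "compose 0 g = 0"
  by (simp add: compose_def)

lemma compose_1 [simp]: "compose 1 g = 1"
  by (simp add: compose_def)

lemma compose_sum: "compose (sum F A) g = (\<Sum>i\<in>A. compose (F i) g)"
  by (induction A rule: infinite_finite_induct) (simp_all add: compose_add)

lemma compose_power: "compose (R ^ n) g = compose R g ^ n"
  by (induction n) (simp_all add: compose_mult)

lemma compose_monom: "compose (monom c n) g = constB c * g ^ n"
  unfolding compose_def by (simp add: map_poly_monom poly_monom)

lemma compose_linear: "compose [:e, \<beta>:] g = constB e + constB \<beta> * g"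
  unfolding compose_def by (simp add: map_poly_pCons)

lemma compose_smult: "compose (smult c R) g = constB c * compose R g"
  unfolding compose_def by (simp add: map_poly_smult constB_mult poly_smult constB_def)

lemma degree_linear_power: "degree ([:e, \<beta>:] ^ i) \<le> i"
proof -
  have "degree ([:e, \<beta>:] ^ i) \<le> degree [:e, \<beta>:] * i" by (rule degree_power_le)
  also have "\<dots> \<le> 1 * i" by (rule mult_le_mono1) simp
  finally show ?thesis by simp
qed

lemma coeff_linear_power: "coeff ([:e, \<beta>:] ^ i) i = \<beta> ^ i"
proof (induction i)
  case 0
  then show ?case by simp
next
  case (Suc i)
  let ?p = "[:e, \<beta>:] ^ i"
  have "coeff ?p (Suc i) = 0"
    using degree_linear_power[of e \<beta> i] by (intro coeff_eq_0) simp
  moreover have "[:e, \<beta>:] ^ Suc i = smult e ?p + pCons 0 (smult \<beta> ?p)"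
    by (simp only: power_Suc mult_pCons_left smult_pCons smult_0_right mult_zero_left pCons_0_0
        add_0_right)
  ultimately show ?case using Suc.IH by simp
qed

lemma homog_subst_const_denominator:
  assumes "degree p \<le> n" "coeff p n \<noteq> 0"
  obtains R where "homog_subst n p a (constB e) = compose R a" "degree R = n"
proof
  let ?R = "\<Sum>i\<le>n. monom (coeff p i * e ^ (n - i)) i"
  show "homog_subst n p a (constB e) = compose ?R a"
    unfolding homog_subst_def compose_sum compose_monom
    by (intro sum.cong refl) (simp add: constB_mult constB_power algebra_simps)
  have c: "coeff ?R j = (if j \<le> n then coeff p j * e ^ (n - j) else 0)" for j
    by (simp add: coeff_sum coeff_monom)
  show "degree ?R = n"
  proof (rule antisym)
    show "degree ?R \<le> n" by (rule degree_le) (simp add: c)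
    show "n \<le> degree ?R" by (rule le_degree) (simp add: c assms(2))
  qed
qed

text \<open>When a = \<beta> b + e, b^n p(a/b) = \<Sum> p_i b^(n-i) (e + \<beta> b)^i is a polynomial in b whose
  degree-n coefficient is p(\<beta>).\<close>
lemma homog_subst_affine_numerator:
  assumes "degree p \<le> n" "poly p \<beta> \<noteq> 0" and a: "a = constB \<beta> * b + constB e"
  obtains R where "homog_subst n p a b = compose R b" "degree R = n"
proof
  let ?R = "\<Sum>i\<le>n. smult (coeff p i) (monom 1 (n - i) * [:e, \<beta>:] ^ i)"
  show "homog_subst n p a b = compose ?R b"
    unfolding homog_subst_def compose_sum compose_smult compose_mult compose_monom
      compose_power compose_linear a
    by (intro sum.cong refl) (simp add: algebra_simps)
  have high: "coeff (monom 1 (n - i) * [:e, \<beta>:] ^ i) j = 0" if "i \<le> n" "j > n" for i j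
  proof -
    have "degree ([:e, \<beta>:] ^ i) < j - (n - i)"
      using degree_linear_power[of e \<beta> i] that by linarith
    then have "coeff ([:e, \<beta>:] ^ i) (j - (n - i)) = 0" by (rule coeff_eq_0)
    then show ?thesis using that by (simp add: coeff_monom_mult)
  qed
  have top: "coeff (monom 1 (n - i) * [:e, \<beta>:] ^ i) n = \<beta> ^ i" if "i \<le> n" for i
    using that by (simp add: coeff_monom_mult coeff_linear_power)
  have "poly p \<beta> = (\<Sum>i\<le>n. coeff p i * \<beta> ^ i)"
    unfolding poly_altdef
    by (rule sum.mono_neutral_left) (use assms(1) in \<open>auto simp: coeff_eq_0\<close>)
  also have "\<dots> = coeff ?R n"
    unfolding coeff_sum by (intro sum.cong refl) (simp add: top)
  finally have "coeff ?R n \<noteq> 0" using assms(2) by simp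
  show "degree ?R = n"
  proof (rule antisym)
    show "degree ?R \<le> n" by (rule degree_le) (auto simp: coeff_sum high)
    show "n \<le> degree ?R" by (rule le_degree) fact
  qed
qed

text \<open>If the cleared denominator b^n q(a/b) is a unit, then either b is constant
  (deg q < n) or a - \<beta> b is constant for a root \<beta> of q (deg q = n); in both cases the
  cleared numerator is a degree-n polynomial in a single bivariate polynomial.\<close>
lemma unit_denominator_composition:
  assumes b: "b \<noteq> 0" and q: "q \<noteq> 0" and pq: "coprime p q"
    and n: "n = max (degree p) (degree q)" "n \<ge> 1"
    and unit: "is_unit (homog_subst n q a b)"
  obtains R g where "homog_subst n p a b = compose R g" "degree R = n"
proof (cases "degree q < n")
  case True
  then have dp: "degree p = n" using n by auto
  then have "p \<noteq> 0" using n by auto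
  then have pn: "coeff p n \<noteq> 0" unfolding dp[symmetric] by simp
  have "b dvd b ^ (n - degree q)" using True by (intro dvd_power) simp
  also have "\<dots> dvd homog_subst n q a b"
    using homog_subst_shift[OF b, of q "degree q" "n - degree q" a] True by simp
  finally have "is_unit b" using unit dvd_unit_imp_unit by blast
  then obtain e where e: "b = constB e" using unit_bpoly_const by blast
  obtain R where "homog_subst n p a (constB e) = compose R a" "degree R = n"
    by (rule homog_subst_const_denominator[OF _ pn]) (simp add: dp)
  then show thesis using that[of R a] e by simp
next
  case False
  then have dqn: "degree q = n" using n by simp
  then have "\<not> constant (poly q)" using n by (simp add: constant_degree)
  then obtain \<beta> where \<beta>: "poly q \<beta> = 0" using fundamental_theorem_of_algebra by blast
  then obtain q' where q': "q = [:- \<beta>, 1:] * q'"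
    by (auto simp: poly_eq_0_iff_dvd elim: dvdE)
  have "q' \<noteq> 0" using q q' by auto
  then have "degree q = 1 + degree q'" unfolding q' by (subst degree_mult_eq) simp_all
  then have dq: "n = 1 + degree q'" using dqn by simp
  have "homog_subst (1 + degree q') ([:- \<beta>, 1:] * q') a b
      = homog_subst 1 [:- \<beta>, 1:] a b * homog_subst (degree q') q' a b"
    by (rule homog_subst_mult[OF b]) simp_all
  then have "homog_subst n q a b = (a - constB \<beta> * b) * homog_subst (degree q') q' a b"
    unfolding dq q' homog_subst_linear .
  then have "is_unit (a - constB \<beta> * b)" using unit dvd_unit_imp_unit by (metis dvd_triv_left)
  then obtain e where "a - constB \<beta> * b = constB e" using unit_bpoly_const by blast
  then have a: "a = constB \<beta> * b + constB e" by (simp add: algebra_simps)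
  have "degree p \<le> n" using n by simp
  then obtain R where "homog_subst n p a b = compose R b" "degree R = n"
    by (rule homog_subst_affine_numerator[OF _ coprime_no_common_root[OF pq \<beta>] a])
  then show thesis by (rule that)
qed

lemma Fract_reduced:
  obtains a b :: bpoly where "b \<noteq> 0" "coprime a b" "h = Fraction_Field.Fract a b"
proof -
  obtain a0 b0 where h: "h = Fraction_Field.Fract a0 b0" and b0: "b0 \<noteq> 0"
    by (rule Fract_cases)
  define g where "g = gcd a0 b0"
  define a where "a = a0 div g"
  define b where "b = b0 div g"
  have a0: "a0 = a * g" and b0g: "b0 = b * g" by (simp_all add: a_def b_def g_def)
  have "b \<noteq> 0" using b0 b0g by auto
  moreover have "coprime a b"
    unfolding a_def b_def g_def using b0 by (intro div_gcd_coprime) simp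
  moreover have "h = Fraction_Field.Fract a b"
    unfolding h using b0 \<open>b \<noteq> 0\<close> by (simp add: eq_fract a0 b0g)
  ultimately show thesis by (rule that)
qed

text \<open>Main step: f = p(h)/q(h) with max (deg p) (deg q) = n \<ge> 2 gives f Q = P for coprime
  cleared numerators P, Q; so Q is a unit and P = R(g) has Y-degree n deg g \<noteq> 1 = deg_Y f.\<close>
lemma indecomposable_fK:
  assumes k: "k \<ge> 1"
  shows "indecomposable (ratfun (fK k))"
  unfolding indecomposable_def decomposable_def
proof clarify
  fix p q :: "complex poly" and h
  assume q: "q \<noteq> 0" and pq: "coprime p q" and n2: "2 \<le> max (degree p) (degree q)"
    and eq0: "eval_at q h \<noteq> 0" and feq: "ratfun (fK k) = eval_at p h / eval_at q h"
  define n where "n = max (degree p) (degree q)"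
  obtain a b where b: "b \<noteq> 0" and ab: "coprime a b" and h: "h = Fraction_Field.Fract a b"
    by (rule Fract_reduced)
  define P where "P = homog_subst n p a b"
  define Q where "Q = homog_subst n q a b"
  have rP: "ratfun P = ratfun b ^ n * eval_at p h"
    unfolding P_def h by (rule ratfun_homog_subst[OF b]) (simp add: n_def)
  have rQ: "ratfun Q = ratfun b ^ n * eval_at q h"
    unfolding Q_def h by (rule ratfun_homog_subst[OF b]) (simp add: n_def)
  have "Q \<noteq> 0" using rQ b eq0 by auto
  have "ratfun (fK k * Q) = ratfun P"
    unfolding ratfun_mult feq rP rQ using eq0 by simp
  then have fQP: "fK k * Q = P" by (simp add: ratfun_inj)
  have "coprime P Q"
    unfolding P_def Q_def using pq ab b q \<open>Q \<noteq> 0\<close>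
    by (intro coprime_homog_subst) (simp_all add: n_def Q_def)
  moreover have "Q dvd P" unfolding fQP[symmetric] by simp
  ultimately have unitQ: "is_unit Q" by (rule coprime_common_divisor) simp
  have "1 \<le> n" using n2 by (simp add: n_def)
  then obtain R g where "P = compose R g" "degree R = n"
    unfolding P_def by (rule unit_denominator_composition[OF b q pq n_def _ unitQ[unfolded Q_def]])
  then have "degree P = n * degree g" by (simp add: degree_compose)
  moreover have "degree P = 1"
    using unitQ \<open>Q \<noteq> 0\<close> degree_fK[OF k] unfolding fQP[symmetric]
    by (subst degree_mult_eq) (auto simp: is_unit_poly_iff)
  ultimately show False using n2 unfolding n_def by simp
qed


theorem mainTheorem6:
  fixes k :: nat
  assumes "k \<ge> 1"
  defines "A \<equiv> varX ^ k - 1"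
      and "B \<equiv> - (constB (of_nat k) * varX ^ (k - 1) * varY + 1)"
      and "f \<equiv> varY * (varX ^ k - 1) + varX"
  shows "poly_first_integral A B f \<and> indecomposable (ratfun f)
    \<and> calB A B = k
    \<and> ({proj_pt 1 \<omega> | \<omega>. \<omega> ^ k = 1} \<union> {proj_pt 0 1}) \<subseteq> spectrum_sigma f 1
    \<and> card ({proj_pt 1 \<omega> | \<omega>. \<omega> ^ k = 1} \<union> {proj_pt 0 1}) = k + 1
    \<and> spectrum_gamma f 1 = {proj_pt 0 1}
    \<and> calB A B + 1 \<le> card (spectrum_sigma f 1)
    \<and> card (spectrum_sigma f 1) < calB A B + 3"
proof -
  have A: "A = AK k" and B: "B = BK k" and f: "f = fK k"
    unfolding A_def AK_def B_def BK_def f_def fK_def by (rule refl)+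
  have sigma: "spectrum_sigma f 1 = {proj_pt 1 \<omega> | \<omega>. \<omega> ^ k = 1} \<union> {proj_pt 0 1}"
    unfolding f by (rule sigma_fK[OF assms(1)])
  have calB: "calB A B = k"
    unfolding A B by (rule calB_AK_BK[OF assms(1)])
  show ?thesis
    using first_integral[OF assms(1)] indecomposable_fK[OF assms(1)] gamma_fK[OF assms(1)]
      card_sigma_points[OF assms(1)] sigma calB
    unfolding A B f by simp
qed

end
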